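(* There exist universal constants $C_1,C_2>0$ such that the following holds. Let $2<p<\infty$ and $s\in(0,1/2)$ with $\frac1p+s=\frac12$. Then $H^s_{2\pi}\hookrightarrow L^p_{2\pi}$, and for all $f\in H^s_{2\pi}$, $$\|f\|_{L^p_{2\pi}}\le 2\tilde R_p\|f\|_{H^s_{2\pi}},\qquad \tilde R_p^p=C_1\frac{p}{p-2}C_2^{p-2}p^{\frac{p-2}{2}}.$$
   Context: $L^p_{2\pi}$ ($1\le p<\infty$) is the space of (classes of a.e. equal) measurable $2\pi$-periodic functions $f:\mathbb R\to\mathbb C$ with $\|f\|_{L^p_{2\pi}}=\big(\frac1{2\pi}\int_0^{2\pi}|f(t)|^pdt\big)^{1/p}<\infty$. For $f\in L^1_{2\pi}$, $\widehat f(k)=\frac1{2\pi}\int_0^{2\pi}f(t)e^{-ikt}dt$. For $s\ge0$, $H^s_{2\pi}=\{f\in L^2_{2\pi}:\ \sum_{k\in\mathbb Z}(1+k^2)^s|\widehat f(k)|^2<\infty\}$ with norm $\|f\|_{H^s_{2\pi}}=\big(\sum_{k\in\mathbb Z}(1+k^2)^s|\widehat f(k)|^2\big)^{1/2}$. *)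

theory Defs
  imports "HOL-Analysis.Analysis"
begin

text \<open>Measurable 2pi-periodic functions real -> complex (representatives of a.e. classes).\<close>
definition periodic_2pi :: "(real \<Rightarrow> complex) \<Rightarrow> bool" where
  "periodic_2pi f \<longleftrightarrow> f \<in> borel_measurable lborel \<and> (\<forall>x. f (x + 2 * pi) = f x)"

definition in_Lp_2pi :: "real \<Rightarrow> (real \<Rightarrow> complex) \<Rightarrow> bool" where
  "in_Lp_2pi p f \<longleftrightarrow> periodic_2pi f \<and>
     (\<integral>\<^sup>+ t. ennreal (indicator {0..2*pi} t * norm (f t) powr p) \<partial>lborel) < \<infinity>"

definition Lp_norm_2pi :: "real \<Rightarrow> (real \<Rightarrow> complex) \<Rightarrow> real" where
  "Lp_norm_2pi p f = ((1 / (2 * pi)) * (LINT t:{0..2*pi}|lborel. norm (f t) powr p)) powr (1 / p)"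

definition fourier_coeff :: "(real \<Rightarrow> complex) \<Rightarrow> int \<Rightarrow> complex" where
  "fourier_coeff f k = (1 / (2 * pi)) *
     (LINT t:{0..2*pi}|lborel. f t * exp (- (\<i> * of_int k * of_real t)))"

definition in_Hs_2pi :: "real \<Rightarrow> (real \<Rightarrow> complex) \<Rightarrow> bool" where
  "in_Hs_2pi s f \<longleftrightarrow> in_Lp_2pi 2 f \<and>
     (\<lambda>k::int. (1 + (real_of_int k)\<^sup>2) powr s * (norm (fourier_coeff f k))\<^sup>2) summable_on UNIV"

definition Hs_norm_2pi :: "real \<Rightarrow> (real \<Rightarrow> complex) \<Rightarrow> real" where
  "Hs_norm_2pi s f = sqrt (\<Sum>\<^sub>\<infinity>k::int. (1 + (real_of_int k)\<^sup>2) powr s * (norm (fourier_coeff f k))\<^sup>2)"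

end

theory Submission
  imports Defs
begin

(* Let P be a trigonometric polynomial with sum_k (1 + k^2)^s |c_k|^2 \<le> A^2. Since
   sum_{|k| \<le> n} (1 + k^2)^(-s) \<le> 1 + p n^(2/p), Cauchy-Schwarz bounds the part of P with
   1 + p |k|^(2/p) \<le> 4^m by A 2^m pointwise. Hence wherever |P| is of size A 2^m the remaining
   high-frequency part is at least A 2^m, which gives
     |P|^p \<le> (2A)^p + C sum_m 2^(m(p-2)) |P_high(m)|^2.
   Integrating with Parseval and summing, for each frequency k, the geometric series over the
   levels m at which k is high yields the L^p bound for P.
   A general f in H^s is reached by two limits. The local averages (1/h) int_x^(x+h) f are
   pointwise limits, as N tends to infinity, of their de la Vallee Poussin means, which are
   trigonometric polynomials with coefficients dominated by those of f; and they tend to f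
   almost everywhere as h tends to 0 by Lebesgue's differentiation theorem. Fatou's lemma
   carries the bound through both limits. *)

section \<open>Trigonometric polynomials\<close>

definition fourier_char :: "int \<Rightarrow> real \<Rightarrow> complex" where
  "fourier_char k x = exp (\<i> * of_int k * of_real x)"

lemma norm_fourier_char [simp]: "norm (fourier_char k x) = 1"
  unfolding fourier_char_def by (simp add: norm_exp_eq_Re)

lemma fourier_char_0 [simp]: "fourier_char 0 x = 1"
  unfolding fourier_char_def by simp

lemma fourier_char_at_0 [simp]: "fourier_char k 0 = 1"
  unfolding fourier_char_def by simp

lemma fourier_char_add: "fourier_char k (x + y) = fourier_char k x * fourier_char k y"
  unfolding fourier_char_def by (simp add: algebra_simps flip: exp_add)

lemma fourier_char_diff:
  "fourier_char k (x - y) = fourier_char k x * exp (- (\<i> * of_int k * of_real y))"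
  unfolding fourier_char_def by (simp add: algebra_simps flip: exp_add)

lemma fourier_char_mult: "fourier_char j x * fourier_char k x = fourier_char (j + k) x"
  unfolding fourier_char_def by (simp add: algebra_simps flip: exp_add)

lemma cnj_fourier_char: "cnj (fourier_char k x) = fourier_char (- k) x"
  unfolding fourier_char_def by (simp add: exp_cnj)

lemma fourier_char_2pi [simp]: "fourier_char k (2 * pi) = 1"
proof -
  have "fourier_char k (2 * pi) = exp ((2 * of_int k * pi) * \<i>)"
    unfolding fourier_char_def by (simp add: algebra_simps)
  also have "\<dots> = 1" using exp_integer_2pi[of "of_int k"] by simp
  finally show ?thesis .
qed

lemma Re_fourier_char: "Re (fourier_char k u) = cos (of_int k * u)"
  and Im_fourier_char: "Im (fourier_char k u) = sin (of_int k * u)"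
  unfolding fourier_char_def by (simp_all add: Re_exp Im_exp)

lemma continuous_on_fourier_char [continuous_intros]: "continuous_on S (fourier_char k)"
  unfolding fourier_char_def by (intro continuous_intros)

lemma fourier_char_has_vector_derivative:
  "(fourier_char k has_vector_derivative (\<i> * of_int k * fourier_char k x)) (at x within S)"
proof -
  have "((\<lambda>z. exp (\<i> * of_int k * z)) has_field_derivative
          (\<i> * of_int k * exp (\<i> * of_int k * of_real x))) (at (of_real x))"
    by (auto intro!: derivative_eq_intros)
  from has_vector_derivative_real_field[OF this] show ?thesis
    unfolding fourier_char_def[abs_def] by simp
qed

lemma fourier_char_has_integral:
  assumes "k \<noteq> 0" "a \<le> b"
  shows "(fourier_char k has_integral
           ((fourier_char k b - fourier_char k a) / (\<i> * of_int k))) {a..b}"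
proof -
  have "((\<lambda>x. fourier_char k x / (\<i> * of_int k)) has_vector_derivative fourier_char k x)
          (at x within {a..b})" for x
    using has_vector_derivative_divide[OF fourier_char_has_vector_derivative[of k x "{a..b}"],
        of "\<i> * of_int k"] assms
    by simp
  from fundamental_theorem_of_calculus[OF assms(2) this] show ?thesis
    by (simp add: diff_divide_distrib)
qed

lemma fourier_char_has_integral_period:
  "(fourier_char k has_integral (if k = 0 then 2 * pi else 0)) {0..2*pi}"
proof (cases "k = 0")
  case True
  have "fourier_char 0 = (\<lambda>x. 1)" by (rule ext) simp
  then show ?thesis using True has_integral_const_real[of "1::complex" 0 "2*pi"]
    by (simp add: scaleR_conv_of_real)
next
  case False
  from fourier_char_has_integral[OF this, of 0 "2*pi"] False show ?thesis by simp
qed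

definition trig_poly :: "(int \<Rightarrow> complex) \<Rightarrow> int set \<Rightarrow> real \<Rightarrow> complex" where
  "trig_poly c S x = (\<Sum>k\<in>S. c k * fourier_char k x)"

lemma continuous_on_trig_poly [continuous_intros]: "continuous_on A (trig_poly c S)"
  unfolding trig_poly_def by (intro continuous_intros)

lemma borel_measurable_trig_poly [measurable]: "trig_poly c S \<in> borel_measurable borel"
  by (rule borel_measurable_continuous_onI) (intro continuous_intros)

lemma norm_trig_poly_le: "norm (trig_poly c S x) \<le> (\<Sum>k\<in>S. norm (c k))"
  unfolding trig_poly_def by (rule order.trans[OF norm_sum]) (simp add: norm_mult)

lemma trig_poly_split:
  "finite T \<Longrightarrow> S \<subseteq> T \<Longrightarrow> trig_poly c T x = trig_poly c S x + trig_poly c (T - S) x"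
  unfolding trig_poly_def by (simp add: sum.subset_diff[of S T] add.commute)

lemma trig_poly_mult_cnj:
  "trig_poly c S x * cnj (trig_poly c S x) =
     (\<Sum>j\<in>S. \<Sum>k\<in>S. c j * cnj (c k) * fourier_char (j - k) x)"
proof -
  have "trig_poly c S x * cnj (trig_poly c S x) =
          (\<Sum>j\<in>S. \<Sum>k\<in>S. c j * cnj (c k) * (fourier_char j x * fourier_char (-k) x))"
    unfolding trig_poly_def
    by (simp add: sum_distrib_left sum_distrib_right cnj_fourier_char mult_ac) (rule sum.swap)
  then show ?thesis by (simp add: fourier_char_mult)
qed

lemma trig_poly_parseval:
  assumes "finite S"
  shows "((\<lambda>x. (norm (trig_poly c S x))\<^sup>2) has_integral
           (2 * pi * (\<Sum>k\<in>S. (norm (c k))\<^sup>2))) {0..2*pi}"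
proof -
  let ?kron = "\<lambda>j k. of_real (if j - k = 0 then 2 * pi else 0) :: complex"
  have "((\<lambda>x. \<Sum>j\<in>S. \<Sum>k\<in>S. c j * cnj (c k) * fourier_char (j - k) x) has_integral
          (\<Sum>j\<in>S. \<Sum>k\<in>S. c j * cnj (c k) * ?kron j k)) {0..2*pi}"
    by (intro has_integral_sum assms has_integral_mult_right fourier_char_has_integral_period)
  also have "(\<Sum>j\<in>S. \<Sum>k\<in>S. c j * cnj (c k) * ?kron j k) = (\<Sum>j\<in>S. c j * cnj (c j) * of_real (2 * pi))"
  proof (rule sum.cong[OF refl])
    fix j assume "j \<in> S"
    have "(\<Sum>k\<in>S. c j * cnj (c k) * ?kron j k) =
            (\<Sum>k\<in>S. if k = j then c j * cnj (c k) * of_real (2 * pi) else 0)"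
      by (rule sum.cong) auto
    also have "\<dots> = c j * cnj (c j) * of_real (2 * pi)"
      using \<open>j \<in> S\<close> assms by (simp add: sum.delta)
    finally show "(\<Sum>k\<in>S. c j * cnj (c k) * ?kron j k) = c j * cnj (c j) * of_real (2 * pi)" .
  qed
  finally have "((\<lambda>x. trig_poly c S x * cnj (trig_poly c S x)) has_integral
                  (\<Sum>j\<in>S. c j * cnj (c j) * of_real (2 * pi))) {0..2*pi}"
    by (simp add: trig_poly_mult_cnj)
  from has_integral_linear[OF this bounded_linear_Re]
  have "((\<lambda>x. Re (trig_poly c S x * cnj (trig_poly c S x))) has_integral
           Re (\<Sum>j\<in>S. c j * cnj (c j) * of_real (2 * pi))) {0..2*pi}"
    by (simp add: o_def)
  moreover have "Re (z * cnj z) = (norm z)\<^sup>2" for z :: complex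
    by (simp add: complex_mult_cnj cmod_def)
  moreover have "Re (\<Sum>j\<in>S. c j * cnj (c j) * of_real (2 * pi)) = 2 * pi * (\<Sum>k\<in>S. (norm (c k))\<^sup>2)"
    by (simp add: Re_sum complex_mult_cnj cmod_def sum_distrib_left mult_ac)
  ultimately show ?thesis by simp
qed

lemma norm_trig_poly_le_weighted:
  assumes w: "\<And>k. k \<in> S \<Longrightarrow> 0 < w k"
  shows "norm (trig_poly c S x) \<le> sqrt ((\<Sum>k\<in>S. 1 / w k) * (\<Sum>k\<in>S. w k * (norm (c k))\<^sup>2))"
proof -
  have "norm (trig_poly c S x) \<le> (\<Sum>k\<in>S. norm (c k))" by (rule norm_trig_poly_le)
  also have "\<dots> = (\<Sum>k\<in>S. sqrt (1 / w k) * sqrt (w k * (norm (c k))\<^sup>2))"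
  proof (rule sum.cong[OF refl])
    fix k assume "k \<in> S"
    with w have "0 < w k" by blast
    then show "norm (c k) = sqrt (1 / w k) * sqrt (w k * (norm (c k))\<^sup>2)"
      by (simp flip: real_sqrt_mult)
  qed
  also have "\<dots> \<le> sqrt ((\<Sum>k\<in>S. 1 / w k) * (\<Sum>k\<in>S. w k * (norm (c k))\<^sup>2))"
  proof (rule real_le_rsqrt)
    have "(\<Sum>k\<in>S. sqrt (1 / w k) * sqrt (w k * (norm (c k))\<^sup>2))\<^sup>2
        \<le> (\<Sum>k\<in>S. (sqrt (1 / w k))\<^sup>2) * (\<Sum>k\<in>S. (sqrt (w k * (norm (c k))\<^sup>2))\<^sup>2)"
      by (rule Cauchy_Schwarz_ineq_sum)
    also have "\<dots> = (\<Sum>k\<in>S. 1 / w k) * (\<Sum>k\<in>S. w k * (norm (c k))\<^sup>2)"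
      using w by (intro arg_cong2[where f = "(*)"] sum.cong) (auto simp: less_imp_le)
    finally show "(\<Sum>k\<in>S. sqrt (1 / w k) * sqrt (w k * (norm (c k))\<^sup>2))\<^sup>2
        \<le> (\<Sum>k\<in>S. 1 / w k) * (\<Sum>k\<in>S. w k * (norm (c k))\<^sup>2)" .
  qed
  finally show ?thesis .
qed

lemma trig_poly_eq_0_if_weighted_sum_le_0:
  assumes "finite T" "\<And>k. k \<in> T \<Longrightarrow> 0 < w k" "(\<Sum>k\<in>T. w k * (norm (c k))\<^sup>2) \<le> 0"
  shows "trig_poly c T x = 0"
proof -
  have "\<forall>k\<in>T. w k * (norm (c k))\<^sup>2 = 0"
    using assms by (subst sum_nonneg_eq_0_iff[symmetric])
      (auto intro!: antisym sum_nonneg simp: less_imp_le)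
  then have "c k = 0" if "k \<in> T" for k
    using that assms(2)[of k] by auto
  then show ?thesis unfolding trig_poly_def by simp
qed

section \<open>The \<open>L\<^sup>p\<close> bound for trigonometric polynomials\<close>

definition sobolev_weight :: "real \<Rightarrow> int \<Rightarrow> real" where
  "sobolev_weight s k = (1 + (real_of_int k)\<^sup>2) powr s"

lemma sobolev_weight_pos: "0 < sobolev_weight s k"
proof -
  have "1 + (real_of_int k)\<^sup>2 > 0" by (simp add: add_pos_nonneg)
  then show ?thesis unfolding sobolev_weight_def by simp
qed

lemma powr_Suc_diff_ge:
  fixes a :: real
  assumes a: "0 < a" "a \<le> 1"
  shows "a * real (Suc n) powr (a - 1) \<le> real (Suc n) powr a - real n powr a"
proof (cases "n = 0")
  case True
  then show ?thesis using a by simp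
next
  case False
  then have n0: "real n > 0" by simp
  have "\<exists>z. real n < z \<and> z < real n + 1 \<and>
      (real n + 1) powr a - real n powr a = ((real n + 1) - real n) * (a * z powr (a - 1))"
    by (rule MVT2) (use n0 in \<open>auto intro!: has_real_derivative_powr\<close>)
  then obtain z where z: "real n < z" "z < real n + 1"
    and eq: "(real n + 1) powr a - real n powr a = a * z powr (a - 1)" by auto
  have "real (Suc n) powr (a - 1) \<le> z powr (a - 1)"
    using z n0 a by (intro powr_mono2') auto
  then show ?thesis using eq a by (simp add: add.commute)
qed

lemma inverse_sobolev_weight_le:
  assumes p: "p > 2" and ps: "1/p + s = 1/2" and k: "k \<noteq> 0"
  shows "1 / sobolev_weight s k \<le> real_of_int \<bar>k\<bar> powr (2/p - 1)"
proof -
  define y where "y = real_of_int \<bar>k\<bar>"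
  have y: "y > 0" using k by (simp add: y_def)
  have "1/p < 1/2" using p by (simp add: field_simps)
  then have s: "0 \<le> s" using ps by linarith
  have "1 / sobolev_weight s k = (1 + y\<^sup>2) powr (-s)"
    unfolding sobolev_weight_def y_def by (simp add: powr_minus_divide)
  also have "\<dots> \<le> (y\<^sup>2) powr (-s)"
    using s y by (intro powr_mono2') auto
  also have "\<dots> = y powr (- 2 * s)"
    using y by (simp add: powr_powr flip: powr_numeral)
  also have "- 2 * s = 2/p - 1"
    using ps p by (simp add: field_simps)
  finally show ?thesis by (simp add: y_def)
qed

lemma sum_inverse_sobolev_weight_le:
  assumes p: "p > 2" and ps: "1/p + s = 1/2"
  shows "(\<Sum>k\<in>{- int n..int n}. 1 / sobolev_weight s k) \<le> 1 + p * real n powr (2/p)"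
proof (induction n)
  case 0
  then show ?case by (simp add: sobolev_weight_def)
next
  case (Suc n)
  define a where "a = 2/p"
  have a: "0 < a" "a \<le> 1" using p by (auto simp: a_def)
  have new: "1 / sobolev_weight s k \<le> real (Suc n) powr (a - 1)" if "\<bar>k\<bar> = int (Suc n)" for k
    using inverse_sobolev_weight_le[OF p ps, of k] that by (simp add: a_def)
  have "{- int (Suc n)..int (Suc n)}
          = insert (int (Suc n)) (insert (- int (Suc n)) {- int n..int n})"
    by auto
  then have "(\<Sum>k\<in>{- int (Suc n)..int (Suc n)}. 1 / sobolev_weight s k)
       = 1 / sobolev_weight s (int (Suc n)) + 1 / sobolev_weight s (- int (Suc n))
         + (\<Sum>k\<in>{- int n..int n}. 1 / sobolev_weight s k)"
    by simp
  also have "\<dots> \<le> 2 * real (Suc n) powr (a - 1) + (1 + p * real n powr a)"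
    using new[of "int (Suc n)"] new[of "- int (Suc n)"] Suc.IH by (simp add: a_def)
  also have "\<dots> \<le> 1 + p * real (Suc n) powr a"
  proof -
    have "p * (a * real (Suc n) powr (a - 1)) \<le> p * (real (Suc n) powr a - real n powr a)"
      using p by (intro mult_left_mono powr_Suc_diff_ge[OF a]) auto
    moreover have "p * (a * real (Suc n) powr (a - 1)) = 2 * real (Suc n) powr (a - 1)"
      using p by (simp add: a_def)
    moreover have "p * (real (Suc n) powr a - real n powr a)
                     = p * real (Suc n) powr a - p * real n powr a"
      by (rule right_diff_distrib)
    ultimately show ?thesis by linarith
  qed
  finally show ?case by (simp add: a_def)
qed

(* An upper bound for the sum of 1 / sobolev_weight s j over |j| \<le> |k|
   (sum_inverse_sobolev_weight_le); a frequency k is low at level m if freq_scale p k \<le> 4^m. *)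
definition freq_scale :: "real \<Rightarrow> int \<Rightarrow> real" where
  "freq_scale p k = 1 + p * real_of_int \<bar>k\<bar> powr (2/p)"

lemma norm_trig_poly_low_freq_le:
  assumes p: "p > 2" and ps: "1/p + s = 1/2" and S: "finite S" and A: "A \<ge> 0"
    and cA: "(\<Sum>k\<in>S. sobolev_weight s k * (norm (c k))\<^sup>2) \<le> A\<^sup>2"
    and low: "\<And>k. k \<in> S \<Longrightarrow> freq_scale p k \<le> 4^m"
  shows "norm (trig_poly c S x) \<le> A * 2^m"
proof -
  have inverse_sum: "(\<Sum>k\<in>S. 1 / sobolev_weight s k) \<le> 4^m"
  proof (cases "S = {}")
    case False
    obtain k0 where k0: "k0 \<in> S" "\<And>k. k \<in> S \<Longrightarrow> \<bar>k\<bar> \<le> \<bar>k0\<bar>"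
      using S False by (metis (mono_tags, lifting) Max_ge Max_in finite_imageI image_iff image_is_empty)
    define n where "n = nat \<bar>k0\<bar>"
    have "S \<subseteq> {- int n..int n}" using k0 by (force simp: n_def)
    then have "(\<Sum>k\<in>S. 1 / sobolev_weight s k) \<le> (\<Sum>k\<in>{- int n..int n}. 1 / sobolev_weight s k)"
      by (intro sum_mono2) (auto simp: sobolev_weight_pos less_imp_le)
    also have "\<dots> \<le> 1 + p * real n powr (2/p)" by (rule sum_inverse_sobolev_weight_le[OF p ps])
    also have "\<dots> \<le> 4^m" using low[OF k0(1)] by (simp add: n_def freq_scale_def)
    finally show ?thesis .
  qed simp
  have "norm (trig_poly c S x)
      \<le> sqrt ((\<Sum>k\<in>S. 1 / sobolev_weight s k) * (\<Sum>k\<in>S. sobolev_weight s k * (norm (c k))\<^sup>2))"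
    by (rule norm_trig_poly_le_weighted) (rule sobolev_weight_pos)
  also have "\<dots> \<le> sqrt ((2^m)\<^sup>2 * A\<^sup>2)"
  proof -
    have "((2::real)^m)\<^sup>2 = 4^m" by (simp add: power2_eq_square flip: power_mult_distrib)
    then show ?thesis
      using inverse_sum cA
      by (intro real_sqrt_le_mono mult_mono) (auto intro!: sum_nonneg simp: sobolev_weight_pos less_imp_le)
  qed
  also have "\<dots> = A * 2^m" using A by (simp flip: power_mult_distrib)
  finally show ?thesis .
qed

(* If z > 2A, take the largest m < M with 2A 2^m \<le> z: then z < 4A 2^m and H m \<ge> z - L m \<ge> A 2^m. *)
lemma powr_le_dyadic_sum:
  fixes z A p :: real and L H :: "nat \<Rightarrow> real"
  assumes p: "p > 2" and A: "A > 0" and z: "0 \<le> z" "z < 2 * A * 2^M"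
    and split: "\<And>m. z \<le> L m + H m" and L: "\<And>m. L m \<le> A * 2^m" and H: "\<And>m. 0 \<le> H m"
  shows "z powr p \<le> (2*A) powr p
           + 4 * 2 powr p * (2*A) powr (p-2) * (\<Sum>m<M. ((2::real)^m) powr (p-2) * (H m)\<^sup>2)"
proof (cases "z \<le> 2*A")
  case True
  have "z powr p \<le> (2*A) powr p" using True z p by (intro powr_mono2) auto
  moreover have "0 \<le> (\<Sum>m<M. ((2::real)^m) powr (p-2) * (H m)\<^sup>2)"
    by (intro sum_nonneg) auto
  ultimately show ?thesis by (simp add: add_increasing2)
next
  case False
  define lam where "lam m = 2 * A * 2^m" for m :: nat
  define J where "J = {m. m < M \<and> lam m \<le> z}"
  have "0 \<in> J" using False z unfolding J_def lam_def by (cases M) auto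
  then have "J \<noteq> {}" "finite J" unfolding J_def by auto
  define m where "m = Max J"
  have "m \<in> J" unfolding m_def using \<open>finite J\<close> \<open>J \<noteq> {}\<close> by (rule Max_in)
  then have mM: "m < M" and lz: "lam m \<le> z" unfolding J_def by auto
  have lam_pos: "lam m > 0" using A by (simp add: lam_def)
  have "z < lam (Suc m)"
  proof (cases "Suc m < M")
    case True
    have "Suc m \<notin> J" using Max_ge[OF \<open>finite J\<close>, of "Suc m"] by (auto simp: m_def)
    then show ?thesis using True unfolding J_def by auto
  next
    case False
    then have "M = Suc m" using mM by simp
    then show ?thesis using z by (simp add: lam_def)
  qed
  then have z_lt: "z < 2 * lam m" by (simp add: lam_def)
  have H_ge: "lam m / 2 \<le> H m"
    using split[of m] L[of m] lz by (simp add: lam_def)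
  have "z powr p \<le> (2 * lam m) powr p" using z_lt z p by (intro powr_mono2) auto
  also have "\<dots> = 2 powr p * (lam m powr (p-2) * lam m powr 2)"
    using lam_pos powr_add[of "lam m" "p-2" 2] by (simp add: powr_mult)
  also have "\<dots> = 4 * 2 powr p * lam m powr (p-2) * (lam m / 2)\<^sup>2"
    using lam_pos by (simp add: powr_numeral power_divide)
  also have "\<dots> \<le> 4 * 2 powr p * lam m powr (p-2) * (H m)\<^sup>2"
    using H_ge lam_pos by (intro mult_left_mono power_mono) auto
  also have "\<dots> = 4 * 2 powr p * (2*A) powr (p-2) * (((2::real)^m) powr (p-2) * (H m)\<^sup>2)"
    using A by (simp add: lam_def powr_mult)
  also have "\<dots> \<le> 4 * 2 powr p * (2*A) powr (p-2) * (\<Sum>m<M. ((2::real)^m) powr (p-2) * (H m)\<^sup>2)"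
    using mM by (intro mult_left_mono member_le_sum) auto
  finally show ?thesis by (simp add: add_increasing)
qed

lemma power_powr_commute:
  fixes a :: real
  assumes "a > 0"
  shows "(a ^ m) powr x = (a powr x) ^ m"
  using assms by (simp add: powr_powr mult.commute flip: powr_realpow)

lemma sum_atMost_power_le:
  fixes r :: real
  assumes r: "r > 1"
  shows "(\<Sum>m\<le>M. r^m) \<le> r^M * (r / (r - 1))"
proof -
  have "(\<Sum>m\<le>M. r^m) = (\<Sum>m<Suc M. r^m)" by (simp add: lessThan_Suc_atMost)
  also have "\<dots> = (r^Suc M - 1) / (r - 1)" by (rule geometric_sum) (use r in auto)
  also have "\<dots> \<le> r^Suc M / (r - 1)" using r by (simp add: divide_right_mono)
  also have "\<dots> = r^M * (r / (r - 1))" by simp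
  finally show ?thesis .
qed

lemma two_powr_ratio_le:
  fixes p :: real
  assumes p: "p > 2"
  shows "2 powr (p-2) / (2 powr (p-2) - 1) \<le> p / (p-2)"
proof -
  define x where "x = p - 2"
  have x: "x > 0" using p by (simp add: x_def)
  have "1 + x * ln 2 \<le> 2 powr x" unfolding powr_def using exp_ge_add_one_self[of "x * ln 2"] by simp
  moreover have "x * (1/2) \<le> x * ln 2" using ln2_ge_two_thirds x by (intro mult_left_mono) auto
  ultimately have r: "1 + x/2 \<le> 2 powr x" by simp
  then have "2 powr x / (2 powr x - 1) \<le> (x+2) / x"
    using x by (simp add: divide_simps) (simp add: algebra_simps)
  then show ?thesis by (simp add: x_def)
qed

lemma sum_dyadic_powr_le:
  fixes p D :: real and J :: "nat set"
  assumes p: "p > 2" and J: "finite J" and below: "\<And>m. m \<in> J \<Longrightarrow> 4^m < D"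
  shows "(\<Sum>m\<in>J. ((2::real)^m) powr (p-2)) \<le> (p/(p-2)) * D powr ((p-2)/2)"
proof (cases "J = {}")
  case True
  then show ?thesis using p by simp
next
  case False
  define M where "M = Max J"
  have "M \<in> J" using J False by (simp add: M_def)
  define r where "r = (2::real) powr (p-2)"
  have r1: "r > 1" using p by (simp add: r_def)
  have "(\<Sum>m\<in>J. ((2::real)^m) powr (p-2)) = (\<Sum>m\<in>J. r^m)"
    by (simp add: power_powr_commute r_def)
  also have "\<dots> \<le> (\<Sum>m\<le>M. r^m)"
    using J r1 by (intro sum_mono2) (auto simp: M_def)
  also have "\<dots> \<le> r^M * (r / (r - 1))" by (rule sum_atMost_power_le[OF r1])
  also have "\<dots> \<le> D powr ((p-2)/2) * (p/(p-2))"
  proof (rule mult_mono)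
    have "r^M = ((4::real)^M) powr ((p-2)/2)"
      by (simp add: power_powr_commute r_def powr_powr flip: powr_numeral)
    also have "\<dots> \<le> D powr ((p-2)/2)"
      using below[OF \<open>M \<in> J\<close>] p by (intro powr_mono2) auto
    finally show "r^M \<le> D powr ((p-2)/2)" .
    show "r / (r - 1) \<le> p / (p-2)" using two_powr_ratio_le[OF p] by (simp add: r_def)
  qed (use r1 in auto)
  finally show ?thesis by (simp add: mult.commute)
qed

lemma freq_scale_powr_le:
  assumes p: "p > 2" and ps: "1/p + s = 1/2"
  shows "freq_scale p k powr ((p-2)/2) \<le> (2*p) powr ((p-2)/2) * sobolev_weight s k"
proof -
  define X where "X = (1 + (real_of_int k)\<^sup>2) powr (1/p)"
  have X1: "1 \<le> X" unfolding X_def using p by (intro ge_one_powr_ge_zero) auto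
  have "real_of_int \<bar>k\<bar> powr (2/p) = (real_of_int \<bar>k\<bar> powr 2) powr (1/p)"
    by (subst powr_powr) simp
  also have "\<dots> = ((real_of_int k)\<^sup>2) powr (1/p)"
    by (subst powr_numeral) auto
  also have "\<dots> \<le> X" unfolding X_def using p by (intro powr_mono2) auto
  finally have "freq_scale p k \<le> 1 + p * X"
    unfolding freq_scale_def using p by (simp add: mult_left_mono)
  also have "\<dots> \<le> (2*p) * X"
  proof -
    have "1 * 1 \<le> p * X" using X1 p by (intro mult_mono) auto
    then show ?thesis by (simp add: mult.commute)
  qed
  finally have "freq_scale p k powr ((p-2)/2) \<le> ((2*p) * X) powr ((p-2)/2)"
    using p by (intro powr_mono2) (auto simp: freq_scale_def)
  also have "\<dots> = (2*p) powr ((p-2)/2) * X powr ((p-2)/2)"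
    using p X1 by (simp add: powr_mult)
  also have "X powr ((p-2)/2) = sobolev_weight s k"
  proof -
    have "s = (p-2)/(2*p)" using ps p by (simp add: field_simps)
    then show ?thesis unfolding X_def sobolev_weight_def powr_powr by (simp add: field_simps)
  qed
  finally show ?thesis .
qed

lemma sum_sum_filter_swap:
  fixes K :: "'m \<Rightarrow> 'a::comm_semiring_0"
  assumes "finite M" "finite T"
  shows "(\<Sum>m\<in>M. K m * (\<Sum>k\<in>{k\<in>T. R m k}. a k)) = (\<Sum>k\<in>T. a k * (\<Sum>m\<in>{m\<in>M. R m k}. K m))"
proof -
  have "(\<Sum>m\<in>M. K m * (\<Sum>k\<in>{k\<in>T. R m k}. a k)) = (\<Sum>m\<in>M. \<Sum>k\<in>T. if R m k then K m * a k else 0)"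
    using assms by (simp add: sum.inter_filter sum_distrib_left if_distrib cong: if_cong)
  also have "\<dots> = (\<Sum>k\<in>T. \<Sum>m\<in>M. if R m k then K m * a k else 0)" by (rule sum.swap)
  also have "\<dots> = (\<Sum>k\<in>T. a k * (\<Sum>m\<in>{m\<in>M. R m k}. K m))"
    using assms by (simp add: sum.inter_filter sum_distrib_left mult.commute if_distrib cong: if_cong)
  finally show ?thesis .
qed

lemma sum_dyadic_high_freq_le:
  assumes p: "p > 2" and ps: "1/p + s = 1/2" and T: "finite T"
    and cA: "(\<Sum>k\<in>T. sobolev_weight s k * (norm (c k))\<^sup>2) \<le> A\<^sup>2"
  shows "(\<Sum>m<M. ((2::real)^m) powr (p-2) * (\<Sum>k\<in>{k\<in>T. 4^m < freq_scale p k}. (norm (c k))\<^sup>2))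
           \<le> (p/(p-2)) * (2*p) powr ((p-2)/2) * A\<^sup>2"
proof -
  define C where "C = (p/(p-2)) * (2*p) powr ((p-2)/2)"
  have C: "C \<ge> 0" using p by (simp add: C_def)
  have per_freq: "(\<Sum>m\<in>{m\<in>{..<M}. 4^m < freq_scale p k}. ((2::real)^m) powr (p-2))
                    \<le> C * sobolev_weight s k" for k
  proof -
    have "(\<Sum>m\<in>{m\<in>{..<M}. 4^m < freq_scale p k}. ((2::real)^m) powr (p-2))
            \<le> (p/(p-2)) * freq_scale p k powr ((p-2)/2)"
      by (rule sum_dyadic_powr_le[OF p]) auto
    also have "\<dots> \<le> C * sobolev_weight s k"
      unfolding C_def mult.assoc by (rule mult_left_mono[OF freq_scale_powr_le[OF p ps]]) (use p in simp)
    finally show ?thesis .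
  qed
  have "(\<Sum>m<M. ((2::real)^m) powr (p-2) * (\<Sum>k\<in>{k\<in>T. 4^m < freq_scale p k}. (norm (c k))\<^sup>2))
      = (\<Sum>k\<in>T. (norm (c k))\<^sup>2 * (\<Sum>m\<in>{m\<in>{..<M}. 4^m < freq_scale p k}. ((2::real)^m) powr (p-2)))"
    using T by (rule sum_sum_filter_swap[OF finite_lessThan])
  also have "\<dots> \<le> (\<Sum>k\<in>T. (norm (c k))\<^sup>2 * (C * sobolev_weight s k))"
    by (intro sum_mono mult_left_mono per_freq) auto
  also have "\<dots> = C * (\<Sum>k\<in>T. sobolev_weight s k * (norm (c k))\<^sup>2)"
    by (simp add: sum_distrib_left mult_ac)
  also have "\<dots> \<le> C * A\<^sup>2" using cA C by (rule mult_left_mono)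
  finally show ?thesis by (simp add: C_def)
qed

definition trig_Lp_const :: "real \<Rightarrow> real \<Rightarrow> real" where
  "trig_Lp_const p A =
     (2*A) powr p + 4 * 2 powr p * (2*A) powr (p-2) * (p/(p-2)) * (2*p) powr ((p-2)/2) * A\<^sup>2"

lemma trig_Lp_const_nonneg: "p > 2 \<Longrightarrow> A \<ge> 0 \<Longrightarrow> trig_Lp_const p A \<ge> 0"
  unfolding trig_Lp_const_def by simp

lemma norm_trig_poly_powr_le_dyadic:
  assumes p: "p > 2" and ps: "1/p + s = 1/2" and T: "finite T" and A: "A > 0"
    and cA: "(\<Sum>k\<in>T. sobolev_weight s k * (norm (c k))\<^sup>2) \<le> A\<^sup>2"
    and M: "norm (trig_poly c T x) < 2 * A * 2^M"
  shows "norm (trig_poly c T x) powr p \<le> (2*A) powr p + 4 * 2 powr p * (2*A) powr (p-2) *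
           (\<Sum>m<M. ((2::real)^m) powr (p-2) * (norm (trig_poly c {k\<in>T. 4^m < freq_scale p k} x))\<^sup>2)"
proof (rule powr_le_dyadic_sum[OF p A norm_ge_zero M])
  fix m
  define S where "S = {k\<in>T. freq_scale p k \<le> 4^m}"
  have S: "S \<subseteq> T" "finite S" using T by (auto simp: S_def)
  have "T - S = {k\<in>T. 4^m < freq_scale p k}" by (auto simp: S_def)
  then show "norm (trig_poly c T x) \<le> norm (trig_poly c S x)
               + norm (trig_poly c {k\<in>T. 4^m < freq_scale p k} x)"
    using trig_poly_split[OF T S(1), of c x] norm_triangle_ineq by simp
  have "(\<Sum>k\<in>S. sobolev_weight s k * (norm (c k))\<^sup>2) \<le> A\<^sup>2"
    using cA sum_mono2[OF T S(1), of "\<lambda>k. sobolev_weight s k * (norm (c k))\<^sup>2"]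
    by (simp add: sobolev_weight_pos less_imp_le)
  then show "norm (trig_poly c S x) \<le> A * 2^m"
    using A by (intro norm_trig_poly_low_freq_le[OF p ps S(2)]) (auto simp: S_def)
qed simp

lemma integral_trig_poly_powr_le:
  assumes p: "p > 2" and ps: "1/p + s = 1/2" and T: "finite T" and A: "A \<ge> 0"
    and cA: "(\<Sum>k\<in>T. sobolev_weight s k * (norm (c k))\<^sup>2) \<le> A\<^sup>2"
  shows "integral {0..2*pi} (\<lambda>x. norm (trig_poly c T x) powr p) \<le> 2 * pi * trig_Lp_const p A"
proof (cases "A = 0")
  case True
  then have "trig_poly c T x = 0" for x
    using cA T by (intro trig_poly_eq_0_if_weighted_sum_le_0) (auto simp: sobolev_weight_pos)
  then show ?thesis using True p by (simp add: trig_Lp_const_def)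
next
  case False
  with A have A: "A > 0" by simp
  define C where "C = 4 * 2 powr p * (2*A) powr (p-2)"
  define high where "high m = {k\<in>T. 4^m < freq_scale p k}" for m :: nat
  obtain M where "(\<Sum>k\<in>T. norm (c k)) / (2*A) < 2^M"
    using real_arch_pow[of 2] by auto
  then have "norm (trig_poly c T x) < 2 * A * 2^M" for x
    using A norm_trig_poly_le[of c T x] by (simp add: divide_less_eq mult.commute)
  then have pointwise: "norm (trig_poly c T x) powr p \<le> (2*A) powr p +
      C * (\<Sum>m<M. ((2::real)^m) powr (p-2) * (norm (trig_poly c (high m) x))\<^sup>2)" for x
    unfolding C_def high_def by (intro norm_trig_poly_powr_le_dyadic[OF p ps T A cA])
  have bound_integral:
    "((\<lambda>x. (2*A) powr p + C * (\<Sum>m<M. ((2::real)^m) powr (p-2) * (norm (trig_poly c (high m) x))\<^sup>2))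
        has_integral 2 * pi * (2*A) powr p
          + C * (\<Sum>m<M. ((2::real)^m) powr (p-2) * (2 * pi * (\<Sum>k\<in>high m. (norm (c k))\<^sup>2))))
        {0..2*pi}"
    using T has_integral_const_real[of "(2*A) powr p" 0 "2*pi"]
    by (intro has_integral_add has_integral_mult_right has_integral_sum trig_poly_parseval)
      (auto simp: high_def)
  have "(\<lambda>x. norm (trig_poly c T x) powr p) integrable_on {0..2*pi}"
    using p by (intro integrable_continuous_interval continuous_on_powr' continuous_intros) auto
  then have "integral {0..2*pi} (\<lambda>x. norm (trig_poly c T x) powr p)
      \<le> 2 * pi * (2*A) powr p
          + C * (\<Sum>m<M. ((2::real)^m) powr (p-2) * (2 * pi * (\<Sum>k\<in>high m. (norm (c k))\<^sup>2)))"
    using pointwise by (intro has_integral_le[OF integrable_integral bound_integral])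
  also have "\<dots> = 2 * pi * ((2*A) powr p
          + C * (\<Sum>m<M. ((2::real)^m) powr (p-2) * (\<Sum>k\<in>high m. (norm (c k))\<^sup>2)))"
    by (simp add: ring_distribs sum_distrib_left sum_distrib_right mult_ac)
  also have "\<dots> \<le> 2 * pi * ((2*A) powr p + C * ((p/(p-2)) * (2*p) powr ((p-2)/2) * A\<^sup>2))"
    unfolding high_def using sum_dyadic_high_freq_le[OF p ps T cA, of M]
    by (intro mult_left_mono add_left_mono) (auto simp: C_def)
  finally show ?thesis by (simp add: trig_Lp_const_def C_def mult_ac)
qed

section \<open>The de la Vallee Poussin kernel and its primitive\<close>

(* From the binomial expansion (2 cos (u/2))^(2N) = sum_{j=0..2N} C(2N,j) e^(i(j-N)u), normalised
   so that the constant coefficient is 1. Only the values vp_coeff N k with |k| \<le> N are used. *)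
definition vp_coeff :: "nat \<Rightarrow> int \<Rightarrow> real" where
  "vp_coeff N k = real ((2*N) choose nat (k + int N)) / real ((2*N) choose N)"

definition vp_kernel :: "nat \<Rightarrow> real \<Rightarrow> real" where
  "vp_kernel N u = (cos (u/2))^(2*N) * 4^N / real ((2*N) choose N)"

lemma vp_coeff_nonneg: "vp_coeff N k \<ge> 0"
  by (simp add: vp_coeff_def)

lemma vp_coeff_le_1: "vp_coeff N k \<le> 1"
  unfolding vp_coeff_def using binomial_maximum'[of N "nat (k + int N)"]
  by (simp add: divide_le_eq_1 del: of_nat_le_iff)

lemma vp_coeff_0 [simp]: "vp_coeff N 0 = 1"
  unfolding vp_coeff_def by simp

lemma vp_coeff_uminus:
  assumes "k \<in> {- int N..int N}"
  shows "vp_coeff N (- k) = vp_coeff N k"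
proof -
  have "nat (- k + int N) = 2 * N - nat (k + int N)" "nat (k + int N) \<le> 2 * N"
    using assms by auto
  then show ?thesis
    unfolding vp_coeff_def using binomial_symmetric[of "nat (k + int N)" "2*N"] by simp
qed

lemma vp_kernel_nonneg: "vp_kernel N u \<ge> 0"
  unfolding vp_kernel_def by (simp add: power_mult)

lemma four_power_le_central_binomial: "(4::real)^N \<le> real (2*N+1) * real ((2*N) choose N)"
proof -
  have "(4::real)^N = real (\<Sum>j\<le>2*N. (2*N) choose j)"
    by (simp add: choose_row_sum power_mult)
  also have "\<dots> \<le> real (\<Sum>j\<le>2*N. (2*N) choose N)"
    by (intro of_nat_mono sum_mono binomial_maximum')
  also have "\<dots> = real (2*N+1) * real ((2*N) choose N)" by (simp add: algebra_simps)
  finally show ?thesis .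
qed

lemma vp_kernel_le: "vp_kernel N u \<le> real (2*N+1) * ((cos (u/2))\<^sup>2)^N"
proof -
  have "vp_kernel N u = ((cos (u/2))\<^sup>2)^N * (4^N / real ((2*N) choose N))"
    unfolding vp_kernel_def by (simp add: power_mult)
  also have "\<dots> \<le> ((cos (u/2))\<^sup>2)^N * real (2*N+1)"
    using four_power_le_central_binomial[of N]
    by (intro mult_left_mono) (auto simp: divide_le_eq)
  finally show ?thesis by (simp add: mult.commute)
qed

lemma vp_kernel_expansion:
  "(\<Sum>k\<in>{- int N..int N}. complex_of_real (vp_coeff N k) * fourier_char k u)
     = complex_of_real (vp_kernel N u)"
proof -
  define z where "z = exp (\<i> * of_real (u/2))"
  define w where "w = exp (- (\<i> * of_real (u/2)))"
  have "complex_of_real (2 * cos (u/2)) = 2 * cos (complex_of_real (u/2))"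
    by (simp only: of_real_mult cos_of_real) simp
  also have "\<dots> = z + w" unfolding z_def w_def cos_exp_eq by simp
  finally have cos_eq: "complex_of_real (2 * cos (u/2)) = z + w" .
  have zw: "z^j * w^(2*N - j) = fourier_char (int j - int N) u" if "j \<le> 2*N" for j
  proof -
    have "z^j * w^(2*N - j)
        = exp (of_nat j * (\<i> * of_real (u/2)) + of_nat (2*N - j) * (- (\<i> * of_real (u/2))))"
      unfolding z_def w_def by (simp only: exp_of_nat_mult[symmetric] exp_add[symmetric])
    also have "of_nat j * (\<i> * of_real (u/2)) + of_nat (2*N - j) * (- (\<i> * of_real (u/2)))
        = \<i> * of_int (int j - int N) * of_real u"
      using that by (simp add: of_nat_diff algebra_simps)
    finally show ?thesis unfolding fourier_char_def .
  qed
  have "complex_of_real ((2 * cos (u/2))^(2*N)) = (z + w)^(2*N)"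
    by (simp flip: cos_eq)
  also have "\<dots> = (\<Sum>j\<le>2*N. of_nat ((2*N) choose j) * z^j * w^(2*N - j))"
    by (rule binomial_ring)
  also have "\<dots> = (\<Sum>j\<le>2*N. of_nat ((2*N) choose j) * fourier_char (int j - int N) u)"
    by (rule sum.cong) (auto simp: zw mult.assoc)
  also have "\<dots> = (\<Sum>k\<in>{- int N..int N}. of_nat ((2*N) choose nat (k + int N)) * fourier_char k u)"
    by (rule sum.reindex_bij_witness[of _ "\<lambda>k. nat (k + int N)" "\<lambda>j. int j - int N"]) auto
  finally have binomial:
    "complex_of_real ((2 * cos (u/2))^(2*N))
       = (\<Sum>k\<in>{- int N..int N}. of_nat ((2*N) choose nat (k + int N)) * fourier_char k u)" .
  have "(\<Sum>k\<in>{- int N..int N}. complex_of_real (vp_coeff N k) * fourier_char k u)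
      = (\<Sum>k\<in>{- int N..int N}. of_nat ((2*N) choose nat (k + int N)) * fourier_char k u)
          / of_nat ((2*N) choose N)"
    unfolding vp_coeff_def by (simp add: sum_divide_distrib)
  also have "\<dots> = complex_of_real (vp_kernel N u)"
    unfolding binomial[symmetric] vp_kernel_def by (simp add: power_mult_distrib power_mult)
  finally show ?thesis .
qed

(* char_primitive k u and cos_primitive k u are the integrals of fourier_char k and of
   cos (k t) over [0, u], so vp_primitive N is the primitive of vp_kernel N vanishing at 0. *)
definition char_primitive :: "int \<Rightarrow> real \<Rightarrow> complex" where
  "char_primitive k u = (if k = 0 then of_real u else (fourier_char k u - 1) / (\<i> * of_int k))"

definition cos_primitive :: "int \<Rightarrow> real \<Rightarrow> real" where
  "cos_primitive k u = (if k = 0 then u else sin (of_int k * u) / of_int k)"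

definition vp_primitive :: "nat \<Rightarrow> real \<Rightarrow> real" where
  "vp_primitive N u = (\<Sum>k\<in>{- int N..int N}. vp_coeff N k * cos_primitive k u)"

definition vp_primitive_complex :: "nat \<Rightarrow> real \<Rightarrow> complex" where
  "vp_primitive_complex N u = (\<Sum>k\<in>{- int N..int N}. of_real (vp_coeff N k) * char_primitive k u)"

lemma Re_char_primitive: "Re (char_primitive k u) = cos_primitive k u"
  unfolding char_primitive_def cos_primitive_def
  by (auto simp: Re_divide Re_fourier_char Im_fourier_char power2_eq_square)

lemma Im_char_primitive:
  "Im (char_primitive k u) = (if k = 0 then 0 else (1 - cos (of_int k * u)) / of_int k)"
  unfolding char_primitive_def
  by (auto simp: Im_divide Re_fourier_char Im_fourier_char power2_eq_square divide_simps)

lemma sum_symmetric_odd_eq_0: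
  fixes g :: "int \<Rightarrow> real"
  assumes "\<And>k. k \<in> {-n..n} \<Longrightarrow> g (- k) = - g k"
  shows "(\<Sum>k\<in>{-n..n}. g k) = 0"
proof -
  have "(\<Sum>k\<in>{-n..n}. g k) = (\<Sum>k\<in>{-n..n}. g (- k))"
    by (rule sum.reindex_bij_witness[of _ uminus uminus]) auto
  also have "\<dots> = - (\<Sum>k\<in>{-n..n}. g k)" using assms by (simp add: sum_negf)
  finally show ?thesis by simp
qed

lemma vp_primitive_complex_eq: "vp_primitive_complex N u = of_real (vp_primitive N u)"
proof (rule complex_eqI)
  show "Re (vp_primitive_complex N u) = Re (complex_of_real (vp_primitive N u))"
    unfolding vp_primitive_complex_def vp_primitive_def by (simp add: Re_sum Re_char_primitive)
  have "Im (vp_primitive_complex N u) = (\<Sum>k\<in>{- int N..int N}. vp_coeff N k * Im (char_primitive k u))"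
    unfolding vp_primitive_complex_def by (simp add: Im_sum)
  also have "\<dots> = 0"
    by (rule sum_symmetric_odd_eq_0) (auto simp: Im_char_primitive vp_coeff_uminus)
  finally show "Im (vp_primitive_complex N u) = Im (complex_of_real (vp_primitive N u))" by simp
qed

lemma char_primitive_diff:
  "char_primitive k (v + h) - char_primitive k v = fourier_char k v * char_primitive k h"
proof (cases "k = 0")
  case False
  then have "\<i> * of_int k \<noteq> 0" by simp
  with False show ?thesis unfolding char_primitive_def by (simp add: fourier_char_add field_simps)
qed (simp add: char_primitive_def)

lemma vp_primitive_complex_diff:
  "vp_primitive_complex N (v + h) - vp_primitive_complex N v
     = (\<Sum>k\<in>{- int N..int N}. of_real (vp_coeff N k) * fourier_char k v * char_primitive k h)"
  unfolding vp_primitive_complex_def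
  by (simp add: char_primitive_diff mult.assoc flip: sum_subtractf right_diff_distrib)

lemma cos_primitive_deriv: "DERIV (cos_primitive k) u :> cos (of_int k * u)"
  unfolding cos_primitive_def[abs_def] by (cases "k = 0") (auto intro!: derivative_eq_intros)

lemma vp_primitive_deriv: "DERIV (vp_primitive N) u :> vp_kernel N u"
proof -
  have "Re (\<Sum>k\<in>{- int N..int N}. complex_of_real (vp_coeff N k) * fourier_char k u)
          = Re (complex_of_real (vp_kernel N u))"
    by (simp only: vp_kernel_expansion)
  then have "(\<Sum>k\<in>{- int N..int N}. vp_coeff N k * cos (of_int k * u)) = vp_kernel N u"
    by (simp add: Re_sum Re_fourier_char)
  moreover have "DERIV (\<lambda>u. \<Sum>k\<in>{- int N..int N}. vp_coeff N k * cos_primitive k u) u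
                   :> (\<Sum>k\<in>{- int N..int N}. vp_coeff N k * cos (of_int k * u))"
    by (intro DERIV_sum DERIV_cmult cos_primitive_deriv)
  ultimately show ?thesis unfolding vp_primitive_def[abs_def] by simp
qed

lemma vp_primitive_shift:
  "vp_primitive N (u + 2 * pi * of_int j) = vp_primitive N u + 2 * pi * of_int j"
proof -
  have "cos_primitive k (u + 2 * pi * of_int j)
          = cos_primitive k u + (if k = 0 then 2 * pi * of_int j else 0)" for k
  proof -
    have "of_int k * (u + 2 * pi * of_int j) = of_int k * u + 2 * pi * of_int (k * j)"
      by (simp add: algebra_simps)
    moreover have "sin (of_int k * u + 2 * pi * of_int (k * j)) = sin (of_int k * u)"
      by (simp only: sin_add sin_int_2pin cos_int_2pin)
    ultimately show ?thesis unfolding cos_primitive_def by simp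
  qed
  then have "vp_primitive N (u + 2 * pi * of_int j)
      = (\<Sum>k\<in>{- int N..int N}. vp_coeff N k * cos_primitive k u + (if k = 0 then 2 * pi * of_int j else 0))"
    unfolding vp_primitive_def by (intro sum.cong) auto
  then show ?thesis unfolding vp_primitive_def by (simp add: sum.distrib)
qed

lemma vp_primitive_minus: "vp_primitive N (- u) = - vp_primitive N u"
proof -
  have "cos_primitive k (- u) = - cos_primitive k u" for k
    unfolding cos_primitive_def by simp
  then show ?thesis unfolding vp_primitive_def by (simp add: sum_negf)
qed

lemma vp_primitive_pi: "vp_primitive N pi = pi"
proof -
  have "vp_primitive N pi = vp_primitive N (- pi + 2 * pi * of_int 1)" by simp
  also have "\<dots> = - vp_primitive N pi + 2 * pi"
    by (simp only: vp_primitive_shift vp_primitive_minus)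
  finally show ?thesis by simp
qed

lemma vp_primitive_mono: "u \<le> v \<Longrightarrow> vp_primitive N u \<le> vp_primitive N v"
  by (rule DERIV_nonneg_imp_nondecreasing[of u v])
    (use vp_primitive_deriv vp_kernel_nonneg in blast)+

lemma vp_primitive_increment_bounds:
  assumes "0 \<le> h" "h \<le> 2 * pi"
  shows "0 \<le> vp_primitive N (v + h) - vp_primitive N v \<and> vp_primitive N (v + h) - vp_primitive N v \<le> 2 * pi"
  using assms vp_primitive_mono[of v "v + h" N] vp_primitive_mono[of "v + h" "v + 2 * pi * of_int 1" N]
  by (simp only: vp_primitive_shift) simp

lemma cos_half_sq_le:
  assumes "0 < d" "d \<le> pi" "d \<le> z" "z \<le> 2*pi - d"
  shows "(cos (z/2))\<^sup>2 \<le> (cos (d/2))\<^sup>2"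
proof -
  have "cos (z/2) \<le> cos (d/2)" using assms by (intro cos_monotone_0_pi_le) auto
  moreover have "cos (pi - z/2) \<le> cos (d/2)" using assms by (intro cos_monotone_0_pi_le) auto
  ultimately have "\<bar>cos (z/2)\<bar> \<le> cos (d/2)" by simp
  then have "\<bar>cos (z/2)\<bar>\<^sup>2 \<le> (cos (d/2))\<^sup>2" by (intro power_mono) auto
  then show ?thesis by simp
qed

lemma vp_primitive_near_pi:
  assumes d: "0 < d" "d \<le> pi" and u: "d \<le> u" "u \<le> 2*pi - d"
  shows "\<bar>vp_primitive N u - pi\<bar> \<le> pi * (real (2*N+1) * ((cos (d/2))\<^sup>2)^N)"
proof -
  define bound where "bound = real (2*N+1) * ((cos (d/2))\<^sup>2)^N"
  have increment: "vp_primitive N b - vp_primitive N a \<le> pi * bound"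
    if ab: "d \<le> a" "a < b" "b \<le> 2*pi - d" "b - a \<le> pi" for a b
  proof -
    obtain z where z: "a < z" "z < b"
      and eq: "vp_primitive N b - vp_primitive N a = (b - a) * vp_kernel N z"
      using MVT2[OF \<open>a < b\<close>, of "vp_primitive N" "vp_kernel N"] vp_primitive_deriv by blast
    have "vp_kernel N z \<le> real (2*N+1) * ((cos (z/2))\<^sup>2)^N" by (rule vp_kernel_le)
    also have "\<dots> \<le> bound"
      unfolding bound_def using z ab d by (intro mult_left_mono power_mono cos_half_sq_le) auto
    finally show ?thesis
      unfolding eq using ab vp_kernel_nonneg[of N z] by (intro mult_mono) auto
  qed
  consider "u < pi" | "u = pi" | "pi < u" by linarith
  then show ?thesis
  proof cases
    case 1
    then show ?thesis
      using increment[of u pi] vp_primitive_mono[of u pi N] u d by (simp add: vp_primitive_pi bound_def)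
  next
    case 3
    then show ?thesis
      using increment[of pi u] vp_primitive_mono[of pi u N] u d by (simp add: vp_primitive_pi bound_def)
  qed (simp add: vp_primitive_pi)
qed

lemma LIMSEQ_linear_mult_power_0:
  fixes q :: real
  assumes "0 \<le> q" "q < 1"
  shows "(\<lambda>N. real (2*N+1) * q^N) \<longlonglongrightarrow> 0"
proof -
  have "(\<lambda>N. 2 * (real N * q^N) + q^N) \<longlonglongrightarrow> 2 * 0 + 0"
    using powser_times_n_limit_0[of q] assms by (intro tendsto_intros LIMSEQ_power_zero) auto
  then show ?thesis by (simp add: algebra_simps)
qed

(* vp_kernel N concentrates at the points of 2 pi Z, so its primitive tends to a staircase. *)
lemma vp_primitive_tendsto:
  assumes u: "\<And>j::int. u \<noteq> 2 * pi * of_int j"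
  shows "(\<lambda>N. vp_primitive N u) \<longlonglongrightarrow> 2 * pi * of_int \<lfloor>u / (2*pi)\<rfloor> + pi"
proof -
  define j where "j = \<lfloor>u / (2*pi)\<rfloor>"
  define v where "v = u - 2 * pi * of_int j"
  have "of_int j \<le> u / (2*pi)" "u / (2*pi) < of_int j + 1" unfolding j_def by linarith+
  then have v1: "0 \<le> v" "v < 2 * pi" unfolding v_def by (auto simp: field_simps)
  have "v \<noteq> 0" using u[of j] unfolding v_def by auto
  define d where "d = min v (2*pi - v)"
  have d: "0 < d" "d \<le> pi" "d \<le> v" "v \<le> 2*pi - d" using v1 \<open>v \<noteq> 0\<close> by (auto simp: d_def)
  define q where "q = (cos (d/2))\<^sup>2"
  have "0 \<le> cos (d/2)" using d by (intro cos_ge_zero) auto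
  moreover have "cos (d/2) < cos 0" using d by (intro cos_monotone_0_pi) auto
  ultimately have q: "0 \<le> q" "q < 1" unfolding q_def by (auto simp: power_less_one_iff)
  have "(\<lambda>N. vp_primitive N v - pi) \<longlonglongrightarrow> 0"
  proof (rule Lim_null_comparison)
    show "\<forall>\<^sub>F N in sequentially. norm (vp_primitive N v - pi) \<le> pi * (real (2*N+1) * q^N)"
      using vp_primitive_near_pi[OF d] by (simp add: q_def)
    show "(\<lambda>N. pi * (real (2*N+1) * q^N)) \<longlonglongrightarrow> 0"
      using tendsto_mult[OF tendsto_const[of pi] LIMSEQ_linear_mult_power_0[OF q]] by simp
  qed
  then have "(\<lambda>N. (vp_primitive N v - pi) + (2 * pi * of_int j + pi)) \<longlonglongrightarrow> 0 + (2 * pi * of_int j + pi)"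
    by (intro tendsto_intros)
  moreover have "vp_primitive N u = (vp_primitive N v - pi) + (2 * pi * of_int j + pi)" for N
    using vp_primitive_shift[of N v j] by (simp add: v_def)
  ultimately show ?thesis unfolding j_def by simp
qed

section \<open>Approximation by smoothed trigonometric polynomials\<close>

lemma set_integrable_if_in_Lp_2pi_2:
  assumes "in_Lp_2pi 2 f"
  shows "set_integrable lborel {0..2*pi} f"
  unfolding set_integrable_def
proof (rule integrableI_bounded)
  have fm: "f \<in> borel_measurable lborel"
    and fin: "(\<integral>\<^sup>+ x. ennreal (indicator {0..2*pi} x * norm (f x) powr 2) \<partial>lborel) < \<infinity>"
    using assms unfolding in_Lp_2pi_def periodic_2pi_def by auto
  then show "(\<lambda>x. indicator {0..2*pi} x *\<^sub>R f x) \<in> borel_measurable lborel" by measurable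
  have "norm (f x) \<le> 1 + norm (f x) powr 2" for x
  proof (cases "norm (f x) \<le> 1")
    case False
    then have "1 * norm (f x) \<le> norm (f x) * norm (f x)" by (intro mult_right_mono) auto
    then have "norm (f x) \<le> norm (f x) ^ 2" by (simp add: power2_eq_square)
    then show ?thesis by (simp add: powr_numeral)
  next
    case True
    have "0 \<le> norm (f x) powr 2" by simp
    then show ?thesis using True by linarith
  qed
  then have "(\<integral>\<^sup>+ x. ennreal (norm (indicator {0..2*pi} x *\<^sub>R f x)) \<partial>lborel)
      \<le> (\<integral>\<^sup>+ x. ennreal (indicator {0..2*pi} x)
                 + ennreal (indicator {0..2*pi} x * norm (f x) powr 2) \<partial>lborel)"
    by (intro nn_integral_mono) (auto simp: indicator_def simp flip: ennreal_plus)
  also have "\<dots> = (\<integral>\<^sup>+ x. ennreal (indicator {0..2*pi} x) \<partial>lborel)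
                 + (\<integral>\<^sup>+ x. ennreal (indicator {0..2*pi} x * norm (f x) powr 2) \<partial>lborel)"
    using fm by (intro nn_integral_add) auto
  also have "\<dots> < \<infinity>" using fin by (simp add: ennreal_indicator)
  finally show "(\<integral>\<^sup>+ x. ennreal (norm (indicator {0..2*pi} x *\<^sub>R f x)) \<partial>lborel) < \<infinity>" .
qed

lemma set_integrable_mult_bounded:
  fixes f g :: "real \<Rightarrow> complex"
  assumes f: "set_integrable lborel A f" and g: "g \<in> borel_measurable lborel"
    and B: "\<And>s. norm (g s) \<le> B"
  shows "set_integrable lborel A (\<lambda>s. f s * g s)"
proof -
  have fi: "integrable lborel (\<lambda>s. indicator A s *\<^sub>R f s)" using f unfolding set_integrable_def .
  have "(\<lambda>s. (indicator A s *\<^sub>R f s) * g s) \<in> borel_measurable lborel"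
    using borel_measurable_integrable[OF fi] g by (rule borel_measurable_times)
  then have meas: "(\<lambda>s. indicator A s *\<^sub>R (f s * g s)) \<in> borel_measurable lborel"
    by (simp add: mult_scaleR_left)
  have "norm (indicator A x *\<^sub>R (f x * g x)) \<le> norm (of_real B * (indicator A x *\<^sub>R f x))" for x
  proof -
    have B0: "0 \<le> B" using B[of x] norm_ge_zero order_trans by blast
    have "norm (indicator A x *\<^sub>R (f x * g x)) = indicator A x * norm (f x) * norm (g x)"
      by (simp add: norm_mult indicator_def)
    also have "\<dots> \<le> indicator A x * norm (f x) * B"
      using B[of x] by (intro mult_left_mono) (auto simp: indicator_def)
    also have "\<dots> = norm (of_real B * (indicator A x *\<^sub>R f x))"
      using B0 by (simp add: norm_mult indicator_def)
    finally show ?thesis .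
  qed
  then show ?thesis unfolding set_integrable_def
    by (intro Bochner_Integration.integrable_bound[OF integrable_mult_right[OF fi] meas] AE_I2)
qed

lemma set_integral_sum:
  fixes F :: "'i \<Rightarrow> real \<Rightarrow> complex"
  assumes "finite I" "\<And>i. i \<in> I \<Longrightarrow> set_integrable lborel A (F i)"
  shows "(LINT s:A|lborel. \<Sum>i\<in>I. F i s) = (\<Sum>i\<in>I. LINT s:A|lborel. F i s)"
  unfolding set_lebesgue_integral_def scaleR_sum_right
  by (rule Bochner_Integration.integral_sum) (use assms in \<open>auto simp: set_integrable_def\<close>)

(* The Fourier coefficients of the de la Vallee Poussin mean of the local average
   x \<mapsto> (1/h) int_x^(x+h) f: averaging over [x, x+h] multiplies the k-th coefficient by
   char_primitive k h / h. *)
definition smoothed_coeff :: "(real \<Rightarrow> complex) \<Rightarrow> nat \<Rightarrow> real \<Rightarrow> int \<Rightarrow> complex" where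
  "smoothed_coeff f N h k =
     of_real (vp_coeff N k) * (char_primitive k h / of_real h) * fourier_coeff f k"

definition local_average :: "(real \<Rightarrow> complex) \<Rightarrow> real \<Rightarrow> real \<Rightarrow> complex" where
  "local_average f h x = of_real (1 / h) * (LINT s:{x..x+h}|lborel. f s)"

lemma trig_poly_smoothed_coeff_eq:
  fixes f :: "real \<Rightarrow> complex"
  assumes fi: "set_integrable lborel {0..2*pi} f"
  shows "trig_poly (smoothed_coeff f N h) {- int N..int N} x
    = (1/(2*pi)) * (LINT s:{0..2*pi}|lborel.
         f s * of_real ((vp_primitive N (x - s + h) - vp_primitive N (x - s)) / h))"
proof -
  define e where "e k s = exp (- (\<i> * complex_of_int k * complex_of_real s))" for k s
  define C where
    "C k = of_real (vp_coeff N k) * (char_primitive k h / of_real h) * fourier_char k x" for k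
  have "e k \<in> borel_measurable lborel" for k
    unfolding e_def by measurable
  then have "set_integrable lborel {0..2*pi} (\<lambda>s. f s * e k s)" for k
    by (rule set_integrable_mult_bounded[OF fi, where B = 1]) (simp add: e_def norm_exp_eq_Re)
  then have integrable: "set_integrable lborel {0..2*pi} (\<lambda>s. C k * (f s * e k s))" for k
    by (rule set_integrable_mult_right)
  have "trig_poly (smoothed_coeff f N h) {- int N..int N} x
      = (\<Sum>k\<in>{- int N..int N}. (1/(2*pi)) * (LINT s:{0..2*pi}|lborel. C k * (f s * e k s)))"
    unfolding trig_poly_def smoothed_coeff_def fourier_coeff_def C_def e_def set_integral_mult_right
    by (simp add: mult_ac)
  also have "\<dots> = (1/(2*pi)) * (LINT s:{0..2*pi}|lborel. \<Sum>k\<in>{- int N..int N}. C k * (f s * e k s))"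
    by (simp add: set_integral_sum integrable sum_distrib_left)
  also have "(\<lambda>s. \<Sum>k\<in>{- int N..int N}. C k * (f s * e k s))
      = (\<lambda>s. f s * ((vp_primitive_complex N (x - s + h) - vp_primitive_complex N (x - s))
                    / of_real h))"
    unfolding C_def e_def fourier_char_diff vp_primitive_complex_diff
    by (simp add: sum_distrib_left sum_divide_distrib mult_ac)
  finally show ?thesis by (simp add: vp_primitive_complex_eq flip: of_real_diff)
qed

lemma floor_divide_2pi:
  assumes "- 2*pi < y" "y < 2*pi" "y \<noteq> 0"
  shows "\<lfloor>y / (2*pi)\<rfloor> = (if 0 < y then 0 else -1)"
  using assms by (auto simp: floor_eq_iff field_simps)

lemma vp_primitive_diff_tendsto:
  assumes x: "0 \<le> x" and h: "0 < h" and xh: "x + h < 2*pi" and s: "0 \<le> s" "s \<le> 2*pi"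
    and a: "\<And>j::int. x - s \<noteq> 2 * pi * of_int j"
    and b: "\<And>j::int. x - s + h \<noteq> 2 * pi * of_int j"
  shows "(\<lambda>N. (vp_primitive N (x - s + h) - vp_primitive N (x - s)) / h)
           \<longlonglongrightarrow> 2 * pi / h * indicator {x..x+h} s"
proof -
  have "x - s \<noteq> 2 * pi * of_int (-1)" "x - s \<noteq> 0" using a[of "-1"] a[of 0] by auto
  then have fa: "\<lfloor>(x - s) / (2*pi)\<rfloor> = (if s < x then 0 else -1)"
    using x xh h s by (subst floor_divide_2pi) auto
  have "x - s + h \<noteq> 0" using b[of 0] by auto
  then have fb: "\<lfloor>(x - s + h) / (2*pi)\<rfloor> = (if s < x + h then 0 else -1)"
    using x xh h s by (subst floor_divide_2pi) auto
  have "(\<lambda>N. (vp_primitive N (x - s + h) - vp_primitive N (x - s)) / h) \<longlonglongrightarrow>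
      ((2 * pi * of_int \<lfloor>(x - s + h) / (2*pi)\<rfloor> + pi) - (2 * pi * of_int \<lfloor>(x - s) / (2*pi)\<rfloor> + pi)) / h"
    using a b h by (intro tendsto_intros vp_primitive_tendsto) auto
  moreover have "s \<noteq> x" "s \<noteq> x + h" using a[of 0] b[of 0] by auto
  ultimately show ?thesis unfolding fa fb using h by (auto simp: indicator_def)
qed

lemma borel_measurable_vp_primitive [measurable]: "vp_primitive N \<in> borel_measurable borel"
  by (intro borel_measurable_continuous_onI continuous_at_imp_continuous_on ballI DERIV_isCont)
    (rule vp_primitive_deriv)

lemma vp_primitive_diff_tendsto_ae:
  assumes x: "0 \<le> x" and h: "0 < h" and xh: "x + h < 2*pi"
  shows "AE s in lborel. s \<in> {0..2*pi} \<longrightarrow>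
           (\<lambda>N. (vp_primitive N (x - s + h) - vp_primitive N (x - s)) / h)
             \<longlonglongrightarrow> 2 * pi / h * indicator {x..x+h} s"
proof -
  define jumps where
    "jumps = range (\<lambda>j::int. x - 2 * pi * of_int j) \<union> range (\<lambda>j::int. x + h - 2 * pi * of_int j)"
  have "countable jumps" unfolding jumps_def by auto
  then have "AE s in lborel. s \<notin> jumps" by (intro AE_not_in countable_imp_null_set_lborel)
  then show ?thesis
  proof eventually_elim
    case (elim s)
    have a: "x - s \<noteq> 2 * pi * of_int j" and b: "x - s + h \<noteq> 2 * pi * of_int j" for j
      using elim unfolding jumps_def by (auto simp: algebra_simps)
    show ?case using x h xh a b vp_primitive_diff_tendsto[of x h s] by auto
  qed
qed

lemma trig_poly_smoothed_coeff_tendsto: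
  fixes f :: "real \<Rightarrow> complex"
  assumes fi: "set_integrable lborel {0..2*pi} f"
    and x: "0 \<le> x" and h: "0 < h" and xh: "x + h < 2*pi"
  shows "(\<lambda>N. trig_poly (smoothed_coeff f N h) {- int N..int N} x) \<longlonglongrightarrow> local_average f h x"
proof -
  define D where "D N s = (vp_primitive N (x - s + h) - vp_primitive N (x - s)) / h" for N s
  define F where "F N s = indicator {0..2*pi} s *\<^sub>R f s * of_real (D N s)" for N s
  define L where
    "L s = indicator {0..2*pi} s *\<^sub>R f s * of_real (2 * pi / h * indicator {x..x+h} s)" for s
  have fI: "integrable lborel (\<lambda>s. indicator {0..2*pi} s *\<^sub>R f s)"
    using fi unfolding set_integrable_def .
  have D_bound: "\<bar>D N s\<bar> \<le> 2 * pi / h" for N s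
    using vp_primitive_increment_bounds[of h N "x - s"] h xh x
    by (auto simp: D_def divide_right_mono)
  have lim: "(\<lambda>N. integral\<^sup>L lborel (F N)) \<longlonglongrightarrow> integral\<^sup>L lborel L"
  proof (rule integral_dominated_convergence
      [where w = "\<lambda>s. 2 * pi / h * norm (indicator {0..2*pi} s *\<^sub>R f s)"])
    show "L \<in> borel_measurable lborel" "F N \<in> borel_measurable lborel" for N
      using borel_measurable_integrable[OF fI] unfolding F_def L_def D_def by measurable
    show "integrable lborel (\<lambda>s. 2 * pi / h * norm (indicator {0..2*pi} s *\<^sub>R f s))"
      using fI by (intro integrable_mult_right integrable_norm)
    show "AE s in lborel. norm (F N s) \<le> 2 * pi / h * norm (indicator {0..2*pi} s *\<^sub>R f s)" for N
    proof (rule AE_I2)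
      fix s
      have "norm (F N s) = norm (indicator {0..2*pi} s *\<^sub>R f s) * \<bar>D N s\<bar>"
        by (simp add: F_def norm_mult)
      also have "\<dots> \<le> norm (indicator {0..2*pi} s *\<^sub>R f s) * (2 * pi / h)"
        by (intro mult_left_mono D_bound) auto
      finally show "norm (F N s) \<le> 2 * pi / h * norm (indicator {0..2*pi} s *\<^sub>R f s)"
        by (simp add: mult.commute)
    qed
    show "AE s in lborel. (\<lambda>N. F N s) \<longlonglongrightarrow> L s"
      using vp_primitive_diff_tendsto_ae[OF x h xh]
    proof eventually_elim
      case (elim s)
      show ?case
      proof (cases "s \<in> {0..2*pi}")
        case True
        then have "(\<lambda>N. D N s) \<longlonglongrightarrow> 2 * pi / h * indicator {x..x+h} s"
          using elim by (simp add: D_def)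
        then show ?thesis unfolding F_def L_def by (intro tendsto_intros)
      qed (simp add: F_def L_def)
    qed
  qed
  have approximant: "trig_poly (smoothed_coeff f N h) {- int N..int N} x
                       = of_real (1/(2*pi)) * integral\<^sup>L lborel (F N)" for N
    unfolding trig_poly_smoothed_coeff_eq[OF fi] F_def D_def set_lebesgue_integral_def
    by (simp add: mult_scaleR_left del: of_real_diff of_real_divide)
  have average: "of_real (1/(2*pi)) * integral\<^sup>L lborel L = local_average f h x"
  proof -
    have "L = (\<lambda>s. of_real (2*pi/h) * (indicator {x..x+h} s *\<^sub>R f s))"
      unfolding L_def using x xh h by (auto simp: indicator_def)
    then have "integral\<^sup>L lborel L = of_real (2*pi/h) * (LINT s:{x..x+h}|lborel. f s)"
      unfolding set_lebesgue_integral_def by (simp only: integral_mult_right_zero)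
    then show ?thesis
      unfolding local_average_def using h by (simp add: of_real_mult[symmetric] del: of_real_mult)
  qed
  show ?thesis
    unfolding approximant average[symmetric] by (intro tendsto_intros lim)
qed

lemma norm_char_primitive_le:
  assumes h: "0 < h"
  shows "norm (char_primitive k h) \<le> h"
proof (cases "k = 0")
  case True
  then show ?thesis using h by (simp add: char_primitive_def)
next
  case False
  have "norm (fourier_char k h - 1) = 2 * \<bar>sin (of_int k * h / 2)\<bar>"
    unfolding fourier_char_def using dist_exp_i_1[of "of_int k * h"] by (simp add: mult.assoc)
  also have "\<dots> \<le> 2 * \<bar>of_int k * h / 2\<bar>" by (intro mult_left_mono abs_sin_x_le_abs_x) simp
  also have "\<dots> = \<bar>of_int k\<bar> * h" using h by (simp add: abs_mult)
  finally show ?thesis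
    using False by (simp add: char_primitive_def norm_divide norm_mult divide_le_eq mult.commute)
qed

lemma norm_smoothed_coeff_le:
  assumes h: "0 < h"
  shows "norm (smoothed_coeff f N h k) \<le> norm (fourier_coeff f k)"
proof -
  have "norm (char_primitive k h / of_real h) \<le> 1"
    using norm_char_primitive_le[OF h, of k] h by (simp add: norm_divide divide_le_eq)
  moreover have "norm (complex_of_real (vp_coeff N k)) \<le> 1"
    using vp_coeff_le_1 vp_coeff_nonneg by simp
  ultimately have "norm (of_real (vp_coeff N k) * (char_primitive k h / of_real h)) \<le> 1"
    unfolding norm_mult by (metis mult_le_one norm_ge_zero)
  then show ?thesis
    unfolding smoothed_coeff_def norm_mult[of _ "fourier_coeff f k"]
    by (simp add: mult_left_le_one_le)
qed

lemma Hs_norm_2pi_nonneg: "0 \<le> Hs_norm_2pi s f"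
  unfolding Hs_norm_2pi_def by (simp add: infsum_nonneg)

lemma sum_sobolev_weight_le_Hs_norm_2pi:
  assumes "in_Hs_2pi s f" "finite T"
  shows "(\<Sum>k\<in>T. sobolev_weight s k * (norm (fourier_coeff f k))\<^sup>2) \<le> (Hs_norm_2pi s f)\<^sup>2"
proof -
  have "(\<Sum>k\<in>T. sobolev_weight s k * (norm (fourier_coeff f k))\<^sup>2)
      \<le> (\<Sum>\<^sub>\<infinity>k. (1 + (real_of_int k)\<^sup>2) powr s * (norm (fourier_coeff f k))\<^sup>2)"
    using assms unfolding in_Hs_2pi_def sobolev_weight_def by (intro finite_sum_le_infsum) auto
  also have "\<dots> = (Hs_norm_2pi s f)\<^sup>2"
    unfolding Hs_norm_2pi_def by (simp add: infsum_nonneg)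
  finally show ?thesis .
qed

lemma nn_integral_smoothed_trig_poly_le:
  assumes p: "p > 2" and ps: "1/p + s = 1/2" and h: "0 < h" and Hs: "in_Hs_2pi s f"
  shows "(\<integral>\<^sup>+ x. ennreal (indicator {0..2*pi} x
             * norm (trig_poly (smoothed_coeff f N h) {- int N..int N} x) powr p) \<partial>lborel)
           \<le> ennreal (2 * pi * trig_Lp_const p (Hs_norm_2pi s f))"
proof -
  let ?P = "trig_poly (smoothed_coeff f N h) {- int N..int N}"
  have "(\<Sum>k\<in>{- int N..int N}. sobolev_weight s k * (norm (smoothed_coeff f N h k))\<^sup>2)
      \<le> (\<Sum>k\<in>{- int N..int N}. sobolev_weight s k * (norm (fourier_coeff f k))\<^sup>2)"
    using norm_smoothed_coeff_le[OF h]
    by (intro sum_mono mult_left_mono power_mono) (auto simp: sobolev_weight_pos less_imp_le)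
  also have "\<dots> \<le> (Hs_norm_2pi s f)\<^sup>2"
    using Hs by (intro sum_sobolev_weight_le_Hs_norm_2pi) auto
  finally have bound: "integral {0..2*pi} (\<lambda>x. norm (?P x) powr p)
                         \<le> 2 * pi * trig_Lp_const p (Hs_norm_2pi s f)"
    by (intro integral_trig_poly_powr_le[OF p ps] Hs_norm_2pi_nonneg) auto
  have "((\<lambda>x. norm (?P x) powr p) has_integral integral {0..2*pi} (\<lambda>x. norm (?P x) powr p)) {0..2*pi}"
    using p by (intro integrable_integral integrable_continuous_interval continuous_on_powr'
        continuous_intros) auto
  then have "(\<integral>\<^sup>+ x. ennreal (indicator {0..2*pi} x * norm (?P x) powr p) \<partial>lborel)
               = ennreal (integral {0..2*pi} (\<lambda>x. norm (?P x) powr p))"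
    by (subst nn_integral_has_integral_lebesgue) auto
  then show ?thesis using bound by (simp add: ennreal_leI)
qed

lemma local_average_tendsto_ae:
  fixes f :: "real \<Rightarrow> complex"
  assumes fi: "set_integrable lborel {0..2*pi} f" and h: "\<And>n. 0 < h n" "h \<longlonglongrightarrow> 0"
  shows "AE x in lborel. x \<in> {0..<2*pi} \<longrightarrow> (\<lambda>n. local_average f (h n) x) \<longlonglongrightarrow> f x"
proof -
  define g where "g s = indicator {0..2*pi} s *\<^sub>R f s" for s
  have gI: "integrable lborel g" using fi unfolding set_integrable_def g_def .
  have "g integrable_on cbox a b" for a b
    using integrable_on_lborel[OF gI] by (rule integrable_on_subcbox) simp
  then obtain Ng where Ng: "negligible Ng"
    and conv: "\<And>x e. \<lbrakk>x \<notin> Ng; 0 < e\<rbrakk> \<Longrightarrow> \<exists>d>0. \<forall>t. 0 < t \<and> t < d \<longrightarrow>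
        norm (integral (cbox x (x + t *\<^sub>R One)) g /\<^sub>R t ^ DIM(real) - g x) < e"
    using integrable_ccontinuous_explicit[of g] by blast
  have "AE x in lebesgue. x \<notin> Ng"
    using Ng by (intro AE_not_in) (simp add: negligible_iff_null_sets)
  then have "AE x in lborel. x \<notin> Ng" by (simp add: AE_completion_iff)
  then show ?thesis
  proof (rule AE_mp, intro AE_I2 impI)
    fix x assume xN: "x \<notin> Ng" and x: "x \<in> {0..<2*pi}"
    show "(\<lambda>n. local_average f (h n) x) \<longlonglongrightarrow> f x"
    proof (rule tendstoI)
      fix e :: real assume e: "0 < e"
      obtain d where d: "d > 0" and close: "\<And>t. 0 < t \<Longrightarrow> t < d \<Longrightarrow>
          norm (integral (cbox x (x + t *\<^sub>R One)) g /\<^sub>R t ^ DIM(real) - g x) < e"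
        using conv[OF xN e] by blast
      have "eventually (\<lambda>n. h n < min d (2*pi - x)) sequentially"
        using h d x by (intro order_tendstoD(2)) auto
      then show "eventually (\<lambda>n. dist (local_average f (h n) x) (f x) < e) sequentially"
      proof eventually_elim
        case (elim n)
        define t where "t = h n"
        have t: "0 < t" "t < d" "x + t < 2*pi" using elim h(1)[of n] unfolding t_def by auto
        have sub: "{x..x+t} \<subseteq> {0..2*pi}" using x t by auto
        have integrable: "set_integrable lborel {x..x+t} f"
          using fi by (rule set_integrable_subset) (use sub in auto)
        have "integral {x..x+t} g = integral {x..x+t} f"
          by (rule integral_cong) (use sub in \<open>auto simp: g_def\<close>)
        then have "integral (cbox x (x + t *\<^sub>R One)) g = integral {x..x+t} f" by simp
        also have "\<dots> = (LINT s:{x..x+t}|lborel. f s)"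
          using set_borel_integral_eq_integral(2)[OF integrable] by simp
        finally have "norm ((LINT s:{x..x+t}|lborel. f s) /\<^sub>R t - f x) < e"
          using close[OF t(1,2)] x by (simp add: g_def)
        then show ?case unfolding t_def[symmetric] local_average_def dist_norm
          by (simp add: scaleR_conv_of_real divide_inverse mult.commute)
      qed
    qed
  qed
qed

lemma nn_integral_le_if_le_liminf:
  assumes "\<And>n. u n \<in> borel_measurable M" "AE x in M. f x \<le> liminf (\<lambda>n. u n x)"
    and "\<And>n. integral\<^sup>N M (u n) \<le> B"
  shows "integral\<^sup>N M f \<le> B"
proof -
  have "integral\<^sup>N M f \<le> (\<integral>\<^sup>+ x. liminf (\<lambda>n. u n x) \<partial>M)"
    using assms(2) by (rule nn_integral_mono_AE)
  also have "\<dots> \<le> liminf (\<lambda>n. integral\<^sup>N M (u n))"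
    using assms(1) by (rule nn_integral_liminf)
  also have "\<dots> \<le> B" using assms(3) by (intro Liminf_le) auto
  finally show ?thesis .
qed

lemma liminf_smoothed_trig_poly_powr:
  fixes f :: "real \<Rightarrow> complex"
  assumes p: "p > 0" and fi: "set_integrable lborel {0..2*pi} f"
    and x: "0 \<le> x" and h: "0 < h" and xh: "x + h < 2*pi"
  shows "liminf (\<lambda>N. ennreal (indicator {0..2*pi} x
             * norm (trig_poly (smoothed_coeff f N h) {- int N..int N} x) powr p))
           = ennreal (norm (local_average f h x) powr p)"
proof -
  have "(\<lambda>N. norm (trig_poly (smoothed_coeff f N h) {- int N..int N} x) powr p)
          \<longlonglongrightarrow> norm (local_average f h x) powr p"
    using p trig_poly_smoothed_coeff_tendsto[OF fi x h xh]
    by (intro tendsto_powr' tendsto_norm tendsto_const) auto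
  then show ?thesis using x h xh by (intro lim_imp_Liminf tendsto_ennrealI) auto
qed

lemma norm_powr_le_liminf_smoothed_ae:
  fixes f :: "real \<Rightarrow> complex"
  assumes p: "p > 0" and fi: "set_integrable lborel {0..2*pi} f"
    and h: "\<And>n. 0 < h n" "h \<longlonglongrightarrow> 0"
  shows "AE x in lborel. ennreal (indicator {0..2*pi} x * norm (f x) powr p)
           \<le> liminf (\<lambda>n. liminf (\<lambda>N. ennreal (indicator {0..2*pi} x
                 * norm (trig_poly (smoothed_coeff f N (h n)) {- int N..int N} x) powr p)))"
proof -
  have "AE x in lborel. x \<noteq> 2*pi" by (intro AE_not_in[of "{2*pi}", simplified]) auto
  with local_average_tendsto_ae[OF fi h] show ?thesis
  proof eventually_elim
    case (elim x)
    show ?case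
    proof (cases "x \<in> {0..<2*pi}")
      case False
      with elim have "x \<notin> {0..2*pi}" by auto
      then show ?thesis by simp
    next
      case True
      have inner: "liminf (\<lambda>N. ennreal (indicator {0..2*pi} x
                     * norm (trig_poly (smoothed_coeff f N (h n)) {- int N..int N} x) powr p))
                   = ennreal (norm (local_average f (h n) x) powr p)"
        if "x + h n < 2*pi" for n
        using True that h(1)[of n] by (intro liminf_smoothed_trig_poly_powr[OF p fi]) auto
      have "eventually (\<lambda>n. x + h n < 2*pi) sequentially"
        using h(2) True by (intro order_tendstoD(2)[of h 0 _ "2*pi - x", THEN eventually_mono]) auto
      then have "eventually (\<lambda>n. ennreal (norm (local_average f (h n) x) powr p)
          = liminf (\<lambda>N. ennreal (indicator {0..2*pi} x
              * norm (trig_poly (smoothed_coeff f N (h n)) {- int N..int N} x) powr p))) sequentially"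
        by eventually_elim (use inner in auto)
      moreover have "(\<lambda>n. ennreal (norm (local_average f (h n) x) powr p))
                       \<longlonglongrightarrow> ennreal (norm (f x) powr p)"
        using elim True p by (intro tendsto_ennrealI tendsto_powr' tendsto_norm) auto
      ultimately have "(\<lambda>n. liminf (\<lambda>N. ennreal (indicator {0..2*pi} x
              * norm (trig_poly (smoothed_coeff f N (h n)) {- int N..int N} x) powr p)))
          \<longlonglongrightarrow> ennreal (norm (f x) powr p)"
        by (rule Lim_transform_eventually[rotated])
      then have "liminf (\<lambda>n. liminf (\<lambda>N. ennreal (indicator {0..2*pi} x
              * norm (trig_poly (smoothed_coeff f N (h n)) {- int N..int N} x) powr p)))
          = ennreal (norm (f x) powr p)"
        by (intro lim_imp_Liminf) auto
      then show ?thesis using True by simp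
    qed
  qed
qed

lemma nn_integral_norm_powr_le:
  assumes p: "p > 2" and ps: "1/p + s = 1/2" and Hs: "in_Hs_2pi s f"
  shows "(\<integral>\<^sup>+ x. ennreal (indicator {0..2*pi} x * norm (f x) powr p) \<partial>lborel)
           \<le> ennreal (2 * pi * trig_Lp_const p (Hs_norm_2pi s f))"
proof -
  define h where "h n = 1 / (real n + 1)" for n
  have h: "0 < h n" for n by (simp add: h_def)
  have h_lim: "h \<longlonglongrightarrow> 0"
    unfolding h_def using LIMSEQ_inverse_real_of_nat by (simp add: inverse_eq_divide add.commute)
  have fi: "set_integrable lborel {0..2*pi} f"
    using Hs unfolding in_Hs_2pi_def by (intro set_integrable_if_in_Lp_2pi_2) auto
  define u where "u n N x = ennreal (indicator {0..2*pi} x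
      * norm (trig_poly (smoothed_coeff f N (h n)) {- int N..int N} x) powr p)" for n N x
  have u: "u n N \<in> borel_measurable lborel" for n N unfolding u_def by measurable
  have u_bound: "integral\<^sup>N lborel (u n N) \<le> ennreal (2 * pi * trig_Lp_const p (Hs_norm_2pi s f))"
    for n N
    unfolding u_def by (rule nn_integral_smoothed_trig_poly_le[OF p ps h Hs])
  have liminf_u: "(\<lambda>x. liminf (\<lambda>N. u n N x)) \<in> borel_measurable lborel" for n
    using u by measurable
  have "AE x in lborel. ennreal (indicator {0..2*pi} x * norm (f x) powr p)
                   \<le> liminf (\<lambda>n. liminf (\<lambda>N. u n N x))"
    unfolding u_def using p by (intro norm_powr_le_liminf_smoothed_ae[OF _ fi h h_lim]) simp
  moreover have "integral\<^sup>N lborel (\<lambda>x. liminf (\<lambda>N. u n N x))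
                   \<le> ennreal (2 * pi * trig_Lp_const p (Hs_norm_2pi s f))" for n
    by (rule nn_integral_le_if_le_liminf[where u = "u n", OF u _ u_bound]) simp
  ultimately show ?thesis by (rule nn_integral_le_if_le_liminf[OF liminf_u])
qed

lemma in_Lp_2pi_and_Lp_norm_2pi_le:
  assumes f: "periodic_2pi f" and p: "p > 0" and B: "B \<ge> 0"
    and bound: "(\<integral>\<^sup>+ x. ennreal (indicator {0..2*pi} x * norm (f x) powr p) \<partial>lborel) \<le> ennreal (2 * pi * B)"
  shows "in_Lp_2pi p f \<and> Lp_norm_2pi p f \<le> B powr (1/p)"
proof
  show "in_Lp_2pi p f"
    using f bound unfolding in_Lp_2pi_def by (simp add: le_less_trans)
  define I where "I = (LINT t:{0..2*pi}|lborel. norm (f t) powr p)"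
  have "f \<in> borel_measurable lborel" using f unfolding periodic_2pi_def by simp
  then have "I = enn2real (\<integral>\<^sup>+ x. ennreal (indicator {0..2*pi} x * norm (f x) powr p) \<partial>lborel)"
    unfolding I_def set_lebesgue_integral_def
    by (subst integral_eq_nn_integral) (auto simp: mult.commute)
  then have "0 \<le> I" "I \<le> 2 * pi * B" using bound B by (auto intro: enn2real_leI)
  then show "Lp_norm_2pi p f \<le> B powr (1/p)"
    unfolding Lp_norm_2pi_def I_def[symmetric] using p by (intro powr_mono2) (auto simp: field_simps)
qed

lemma trig_Lp_const_le:
  assumes p: "p > 2" and A: "A \<ge> 0"
  shows "trig_Lp_const p A \<le> 2 powr p * (5 * (p/(p-2)) * 4 powr (p-2) * p powr ((p-2)/2)) * A powr p"
proof (cases "A = 0")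
  case True
  then show ?thesis using p by (simp add: trig_Lp_const_def)
next
  case False
  then have A0: "A > 0" using A by simp
  define X where "X = (p/(p-2)) * 4 powr (p-2) * p powr ((p-2)/2)"
  have "1 * 1 * 1 \<le> X"
    unfolding X_def using p by (intro mult_mono ge_one_powr_ge_zero) auto
  then have X1: "1 \<le> X" by simp
  have e1: "(2*A) powr p = 2 powr p * A powr p" using A0 by (simp add: powr_mult)
  have e2: "(2*A) powr (p-2) * A\<^sup>2 = 2 powr (p-2) * A powr p"
    using A0 powr_add[of A "p-2" 2] by (simp add: powr_mult powr_numeral mult_ac)
  have e3: "(2*p) powr ((p-2)/2) = 2 powr ((p-2)/2) * p powr ((p-2)/2)"
    using p by (simp add: powr_mult)
  have e4: "2 powr (p-2) * 2 powr ((p-2)/2) \<le> (4::real) powr (p-2)"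
  proof -
    have "(2::real) powr (p-2) * 2 powr ((p-2)/2) = 2 powr ((p-2) + (p-2)/2)" by (simp add: powr_add)
    also have "\<dots> \<le> 2 powr (2 * (p-2))" using p by (intro powr_mono) (auto simp: field_simps)
    also have "\<dots> = ((2::real) powr 2) powr (p-2)" by (rule powr_powr[symmetric])
    also have "\<dots> = 4 powr (p-2)" by simp
    finally show ?thesis .
  qed
  have "trig_Lp_const p A = 2 powr p * A powr p
      + 4 * 2 powr p * (p/(p-2)) * p powr ((p-2)/2) * (2 powr (p-2) * 2 powr ((p-2)/2)) * A powr p"
    unfolding trig_Lp_const_def e1 e3 using e2 by (simp add: mult_ac)
  also have "\<dots> \<le> 2 powr p * A powr p + 4 * 2 powr p * (p/(p-2)) * p powr ((p-2)/2) * 4 powr (p-2) * A powr p"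
    using e4 p by (intro add_left_mono mult_right_mono mult_left_mono) auto
  also have "\<dots> = 2 powr p * A powr p * (1 + 4 * X)" unfolding X_def by (simp add: algebra_simps)
  also have "\<dots> \<le> 2 powr p * A powr p * (5 * X)" using X1 by (intro mult_left_mono) auto
  finally show ?thesis unfolding X_def by (simp only: mult_ac)
qed

lemma trig_Lp_const_root_le:
  assumes p: "p > 2" and A: "A \<ge> 0"
  shows "trig_Lp_const p A powr (1/p) \<le> 2 * (5 * (p/(p-2)) * 4 powr (p-2) * p powr ((p-2)/2)) powr (1/p) * A"
proof -
  define K where "K = 5 * (p/(p-2)) * 4 powr (p-2) * p powr ((p-2)/2)"
  have K: "K > 0" unfolding K_def using p by simp
  have "trig_Lp_const p A powr (1/p) \<le> (2 powr p * K * A powr p) powr (1/p)"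
    using trig_Lp_const_le[OF p A] trig_Lp_const_nonneg[OF p A] p unfolding K_def
    by (intro powr_mono2) auto
  also have "\<dots> = (2 powr p) powr (1/p) * K powr (1/p) * (A powr p) powr (1/p)"
    using p A K by (simp add: powr_mult)
  also have "\<dots> = 2 * K powr (1/p) * A"
    using p A by (simp add: powr_powr)
  finally show ?thesis unfolding K_def .
qed

theorem proposition7p6:
  shows "\<exists>C1::real. \<exists>C2::real. C1 > 0 \<and> C2 > 0 \<and>
    (\<forall>p s::real. 2 < p \<longrightarrow> 0 < s \<longrightarrow> s < 1/2 \<longrightarrow> 1 / p + s = 1 / 2 \<longrightarrow>
      (\<forall>f. in_Hs_2pi s f \<longrightarrow>
         in_Lp_2pi p f \<and>
         Lp_norm_2pi p f \<le> 2 * (C1 * (p / (p - 2)) * C2 powr (p - 2) * p powr ((p - 2) / 2)) powr (1 / p)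
                              * Hs_norm_2pi s f))"
proof (intro exI conjI allI impI)
  show "(5::real) > 0" "(4::real) > 0" by simp_all
  fix p s :: real and f :: "real \<Rightarrow> complex"
  assume p: "2 < p" and "0 < s" "s < 1/2" and ps: "1 / p + s = 1 / 2" and Hs: "in_Hs_2pi s f"
  have A: "Hs_norm_2pi s f \<ge> 0" by (rule Hs_norm_2pi_nonneg)
  have "periodic_2pi f" using Hs unfolding in_Hs_2pi_def in_Lp_2pi_def by auto
  then have Lp: "in_Lp_2pi p f \<and> Lp_norm_2pi p f \<le> trig_Lp_const p (Hs_norm_2pi s f) powr (1/p)"
    using p A trig_Lp_const_nonneg nn_integral_norm_powr_le[OF p ps Hs]
    by (intro in_Lp_2pi_and_Lp_norm_2pi_le) auto
  then show "in_Lp_2pi p f" by simp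
  show "Lp_norm_2pi p f \<le> 2 * (5 * (p / (p - 2)) * 4 powr (p - 2) * p powr ((p - 2) / 2)) powr (1 / p)
                  * Hs_norm_2pi s f"
    using Lp trig_Lp_const_root_le[OF p A] by linarith
qed

end
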